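(* Let $\alpha>0$, $\beta>0$, $\gamma>0$ and suppose that ${}_1F_2\left(\alpha\,;\beta,\gamma\,;-\frac{x^2}{4}\right)\ge0$ for all $x\in\mathbb{R}$. If $p\ge2$ and $0<a_j<b_j$ for $j=1,\dots,p-1$, then $$\Phi(x)={}_pF_{p+1}\left(\begin{array}{c}\alpha,\,a_1,\dots,a_{p-1}\\ \beta,\,\gamma,\,b_1,\dots,b_{p-1}\end{array}\biggl|\,-\frac{x^2}{4}\right)>0\quad\text{for all } x>0.$$
   Context: Generalized hypergeometric functions are defined by ${}_pF_{q}\left(\begin{array}{c}\alpha_1,\dots,\alpha_p\\ \beta_1,\dots,\beta_q\end{array}\big|\, z\right)=\sum_{k=0}^\infty\frac{(\alpha_1)_k\cdots(\alpha_p)_k}{k!\,(\beta_1)_k\cdots(\beta_q)_k}z^k$, where $(\alpha)_k=\Gamma(\alpha+k)/\Gamma(\alpha)$; in particular ${}_1F_2\left(a\,;b,c\,;z\right)$ has upper parameter $a$ and lower parameters $b,c$. *)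

theory Defs
  imports "HOL-Analysis.Analysis"
begin

definition hypergeom :: "real list \<Rightarrow> real list \<Rightarrow> real \<Rightarrow> real" where
  "hypergeom as bs z =
     (\<Sum>k. (\<Prod>a\<leftarrow>as. pochhammer a k) / (fact k * (\<Prod>b\<leftarrow>bs. pochhammer b k)) * z ^ k)"

end

theory Submission
  imports Defs "HOL-Real_Asymp.Real_Asymp"
begin

(* Adjoining a pair of parameters a < b multiplies the k-th coefficient of an entire power series
   F(u) = \<Sum> c_k u^k by (a)_k / (b)_k = B(a + k, b - a) / B(a, b - a), which yields Euler's
   integral transform
     \<Sum> (a)_k / (b)_k c_k z^k = (1 / B(a, b - a)) \<integral>\<^sub>0\<^sup>1 t^(a-1) (1-t)^(b-a-1) F(z t) dt.
   If F(0) = 1 and F \<ge> 0 on (-\<infinity>, 0], then for z \<le> 0 the integrand is nonnegative and positive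
   near t = 0, so the transform is positive on (-\<infinity>, 0]. Starting from the nonnegative 1F2 and
   adjoining the pairs (a_j, b_j) one at a time gives the theorem. *)

lemma pochhammer_le_pochhammer:
  fixes a b :: real
  assumes "0 < a" "a \<le> b"
  shows "pochhammer a k \<le> pochhammer b k"
proof (induction k)
  case (Suc k)
  then show ?case
    unfolding pochhammer_Suc using assms by (intro mult_mono) (auto intro: pochhammer_nonneg)
qed simp

lemma pochhammer_div_pochhammer_eq_Beta:
  fixes a b :: real
  assumes "0 < a" "a < b"
  shows "pochhammer a k / pochhammer b k = Beta (a + real k) (b - a) / Beta a (b - a)"
proof -
  have not_pole: "x \<notin> \<int>\<^sub>\<le>\<^sub>0" if "x > 0" for x :: real
    using that by (auto elim!: nonpos_Ints_cases)
  have Gamma_nonzero: "Gamma x \<noteq> 0" if "x > 0" for x :: real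
    using Gamma_real_pos[OF that] by simp
  show ?thesis
    using assms by (simp add: pochhammer_Gamma not_pole Gamma_nonzero Beta_def field_simps)
qed

lemma Beta_real_pos: "0 < a \<Longrightarrow> 0 < b \<Longrightarrow> 0 < Beta a (b::real)"
  by (simp add: Beta_def)

lemma summable_norm_pochhammer_ratio_powser:
  fixes a b :: real and c :: "nat \<Rightarrow> real"
  assumes "0 < a" "a < b" and summable: "summable (\<lambda>k. norm (c k * z ^ k))"
  shows "summable (\<lambda>k. norm (pochhammer a k / pochhammer b k * c k * z ^ k))"
proof (rule summable_comparison_test'[OF summable])
  fix k
  have pos: "0 < pochhammer a k" "0 < pochhammer b k"
    using assms by (auto intro: pochhammer_pos)
  moreover have "pochhammer a k \<le> pochhammer b k"
    using assms by (intro pochhammer_le_pochhammer) auto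
  ultimately have ratio: "0 \<le> pochhammer a k / pochhammer b k" "pochhammer a k / pochhammer b k \<le> 1"
    by auto
  have "norm (norm (pochhammer a k / pochhammer b k * c k * z ^ k))
          = pochhammer a k / pochhammer b k * norm (c k * z ^ k)"
    using pos by (simp add: abs_mult)
  also have "\<dots> \<le> 1 * norm (c k * z ^ k)"
    using ratio(2) by (intro mult_right_mono) auto
  finally show "norm (norm (pochhammer a k / pochhammer b k * c k * z ^ k)) \<le> norm (c k * z ^ k)"
    by simp
qed

lemma has_integral_Euler_transform_powser:
  fixes a b z :: real and c :: "nat \<Rightarrow> real"
  assumes ab: "0 < a" "a < b" and summable: "\<And>z. summable (\<lambda>k. norm (c k * z ^ k))"
  shows "((\<lambda>t. t powr (a - 1) * (1 - t) powr (b - a - 1) * (\<Sum>k. c k * (z * t) ^ k))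
           has_integral Beta a (b - a) * (\<Sum>k. pochhammer a k / pochhammer b k * c k * z ^ k))
         {0..1}"
proof -
  define w where "w t = t powr (a - 1) * (1 - t) powr (b - a - 1)" for t :: real
  define M where "M = (\<Sum>k. norm (c k * z ^ k))"
  have powr_shift: "t powr (a + real k - 1) = t powr (a - 1) * t ^ k" if "t \<ge> 0" for t k
  proof (cases "t = 0")
    case False
    have "a + real k - 1 = (a - 1) + real k"
      by simp
    then show ?thesis
      using False that by (simp only: powr_add powr_realpow)
  qed simp
  have partial_sums: "((\<lambda>t. w t * (\<Sum>k<n. c k * (z * t) ^ k)) has_integral
                        (\<Sum>k<n. c k * z ^ k * Beta (a + real k) (b - a))) {0..1}" for n
  proof (rule has_integral_eq[OF _ has_integral_sum[OF finite_lessThan]])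
    show "((\<lambda>t. c k * z ^ k * (t powr (a + real k - 1) * (1 - t) powr (b - a - 1)))
            has_integral c k * z ^ k * Beta (a + real k) (b - a)) {0..1}" for k
      using has_integral_Beta_real[of "a + real k" "b - a"] ab by (intro has_integral_mult_right) auto
  qed (simp add: w_def sum_distrib_left powr_shift power_mult_distrib mult_ac)
  have dominant: "(\<lambda>t. w t * M) integrable_on {0..1}"
    using has_integral_mult_left[OF has_integral_Beta_real[of a "b - a"], of M] ab
    unfolding w_def by (auto simp: integrable_on_def)
  have dominated: "\<forall>t\<in>{0..1}. norm (w t * (\<Sum>k<n. c k * (z * t) ^ k)) \<le> w t * M" for n
  proof
    fix t :: real assume t: "t \<in> {0..1}"
    have "norm (c k * (z * t) ^ k) \<le> norm (c k * z ^ k)" for k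
      using t mult_left_mono[of "t ^ k" 1 "\<bar>c k * z ^ k\<bar>"]
      by (simp add: power_mult_distrib abs_mult power_le_one mult.assoc)
    then have "norm (\<Sum>k<n. c k * (z * t) ^ k) \<le> M"
      unfolding M_def
      by (intro order_trans[OF norm_sum] order_trans[OF sum_mono sum_le_suminf[OF summable]]) auto
    moreover have "w t \<ge> 0"
      using t by (simp add: w_def)
    ultimately show "norm (w t * (\<Sum>k<n. c k * (z * t) ^ k)) \<le> w t * M"
      by (simp add: abs_mult mult_left_mono)
  qed
  have pointwise: "\<forall>t\<in>{0..1}. (\<lambda>n. w t * (\<Sum>k<n. c k * (z * t) ^ k))
                                  \<longlonglongrightarrow> w t * (\<Sum>k. c k * (z * t) ^ k)"
    using summable_LIMSEQ[OF summable_norm_cancel[OF summable]] by (auto intro: tendsto_mult_left)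
  have Beta_term: "c k * z ^ k * Beta (a + real k) (b - a)
          = Beta a (b - a) * (pochhammer a k / pochhammer b k * c k * z ^ k)" for k
    unfolding pochhammer_div_pochhammer_eq_Beta[OF ab] using Beta_real_pos[of a "b - a"] ab by simp
  have integrals: "(\<lambda>n. \<Sum>k<n. c k * z ^ k * Beta (a + real k) (b - a))
      \<longlonglongrightarrow> Beta a (b - a) * (\<Sum>k. pochhammer a k / pochhammer b k * c k * z ^ k)"
    unfolding Beta_term sum_distrib_left[symmetric]
    using summable_norm_cancel[OF summable_norm_pochhammer_ratio_powser[OF ab summable]]
    by (intro tendsto_mult_left summable_LIMSEQ)
  from has_integral_dominated_convergence[OF partial_sums dominant dominated pointwise integrals]
  show ?thesis unfolding w_def .
qed

lemma has_integral_pos_of_powr_lower_bound: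
  fixes f :: "real \<Rightarrow> real"
  assumes f: "(f has_integral I) {0..1}" and nonneg: "\<And>t. t \<in> {0..1} \<Longrightarrow> 0 \<le> f t"
    and "0 < a" "0 < C" "0 < \<delta>" "\<delta> \<le> 1"
    and lower: "\<And>t. t \<in> {0..\<delta>} \<Longrightarrow> C * t powr (a - 1) \<le> f t"
  shows "0 < I"
proof -
  define g where "g t = (if t \<in> cbox 0 \<delta> then C * t powr (a - 1) else 0)" for t
  have "((\<lambda>t. C * t powr (a - 1)) has_integral C * (\<delta> powr a / a)) {0..\<delta>}"
    using has_integral_powr_from_0[of "a - 1" \<delta>] assms by (intro has_integral_mult_right) auto
  then have "(g has_integral C * (\<delta> powr a / a)) {0..1}"
    using has_integral_restrict_closed_subintervals_eq
        [where f = "\<lambda>t. C * t powr (a - 1)" and c = 0 and d = \<delta> and a = 0 and b = 1] assms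
    by (simp add: g_def[abs_def])
  then have "C * (\<delta> powr a / a) \<le> I"
    by (rule has_integral_le[OF _ f]) (auto simp: g_def nonneg lower)
  moreover have "0 < C * (\<delta> powr a / a)"
    using assms by simp
  ultimately show ?thesis by linarith
qed

lemma powser_pochhammer_ratio_pos:
  fixes a b z :: real and c :: "nat \<Rightarrow> real"
  assumes ab: "0 < a" "a < b" and summable: "\<And>z. summable (\<lambda>k. norm (c k * z ^ k))"
    and "c 0 = 1" and nonneg: "\<And>u. u \<le> 0 \<Longrightarrow> 0 \<le> (\<Sum>k. c k * u ^ k)" and "z \<le> 0"
  shows "0 < (\<Sum>k. pochhammer a k / pochhammer b k * c k * z ^ k)"
proof -
  define F where "F u = (\<Sum>k. c k * u ^ k)" for u
  define G where "G t = (1 - t) powr (b - a - 1) * F (z * t)" for t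
  have "isCont F (z * 0)"
    unfolding F_def by (auto intro: isCont_powser_converges_everywhere summable_norm_cancel summable)
  then have "isCont G 0"
    unfolding G_def by (intro continuous_intros isCont_o2[where f = "\<lambda>t. z * t" and a = 0 and g = F]) auto
  then have "(G \<longlongrightarrow> G 0) (nhds 0)"
    by (simp add: isCont_def tendsto_at_iff_tendsto_nhds)
  moreover have "G 0 = 1"
    using \<open>c 0 = 1\<close> by (simp add: G_def F_def)
  ultimately have "\<forall>\<^sub>F t in nhds 0. 1/2 < G t"
    by (intro order_tendstoD(1)) auto
  then obtain d where "0 < d" and G_near_0: "\<And>t. dist t 0 < d \<Longrightarrow> 1/2 < G t"
    unfolding eventually_nhds_metric by blast
  have integrand: "t powr (a - 1) * (1 - t) powr (b - a - 1) * F (z * t) = t powr (a - 1) * G t" for t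
    by (simp add: G_def)
  have "0 < Beta a (b - a) * (\<Sum>k. pochhammer a k / pochhammer b k * c k * z ^ k)"
  proof (rule has_integral_pos_of_powr_lower_bound
        [OF has_integral_Euler_transform_powser[OF ab summable, of z, folded F_def]])
    show "0 \<le> t powr (a - 1) * (1 - t) powr (b - a - 1) * F (z * t)" if "t \<in> {0..1}" for t
      using that \<open>z \<le> 0\<close> nonneg[of "z * t"] by (simp add: F_def mult_nonpos_nonneg)
    show "1/2 * t powr (a - 1) \<le> t powr (a - 1) * (1 - t) powr (b - a - 1) * F (z * t)"
      if "t \<in> {0..min 1 (d/2)}" for t
      using that \<open>0 < d\<close> G_near_0[of t] mult_left_mono[of "1/2" "G t" "t powr (a - 1)"]
      unfolding integrand by (auto simp: mult.commute)
  qed (use ab \<open>0 < d\<close> in auto)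
  then show ?thesis
    using Beta_real_pos[of a "b - a"] ab by (simp add: zero_less_mult_iff)
qed

definition hypergeom_coeff :: "real list \<Rightarrow> real list \<Rightarrow> nat \<Rightarrow> real" where
  "hypergeom_coeff as bs k = (\<Prod>a\<leftarrow>as. pochhammer a k) / (fact k * (\<Prod>b\<leftarrow>bs. pochhammer b k))"

lemma hypergeom_eq_powser: "hypergeom as bs z = (\<Sum>k. hypergeom_coeff as bs k * z ^ k)"
  by (simp add: hypergeom_def hypergeom_coeff_def)

lemma hypergeom_coeff_0 [simp]: "hypergeom_coeff as bs 0 = 1"
proof -
  have "(\<Prod>x\<leftarrow>xs. 1::real) = 1" for xs :: "real list"
    by (induction xs) auto
  then show ?thesis
    by (simp add: hypergeom_coeff_def)
qed

lemma hypergeom_coeff_insert: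
  "hypergeom_coeff (x # a # as) (y # z # b # bs) k
     = pochhammer a k / pochhammer b k * hypergeom_coeff (x # as) (y # z # bs) k"
  by (simp add: hypergeom_coeff_def mult_ac)

lemma hypergeom_coeff_1F2_Suc:
  "hypergeom_coeff [\<alpha>] [\<beta>, \<gamma>] (Suc n)
     = hypergeom_coeff [\<alpha>] [\<beta>, \<gamma>] n * ((\<alpha> + n) / ((n + 1) * (\<beta> + n) * (\<gamma> + n)))"
  by (simp add: hypergeom_coeff_def pochhammer_Suc field_simps)

lemma summable_norm_hypergeom_coeff_1F2:
  fixes \<alpha> \<beta> \<gamma> :: real
  assumes "0 < \<alpha>" "0 < \<beta>" "0 < \<gamma>"
  shows "summable (\<lambda>k. norm (hypergeom_coeff [\<alpha>] [\<beta>, \<gamma>] k * z ^ k))"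
proof (rule abs_summable_in_conv_radius)
  let ?c = "hypergeom_coeff [\<alpha>] [\<beta>, \<gamma>]"
  have pos: "0 < ?c n" for n
    using assms by (simp add: hypergeom_coeff_def pochhammer_pos)
  then have nonzero: "?c n \<noteq> 0" for n
    by (metis less_irrefl)
  have "norm (?c n) / norm (?c (Suc n)) = (real n + 1) * (\<beta> + n) * (\<gamma> + n) / (\<alpha> + n)" for n
    using pos[of n] assms unfolding hypergeom_coeff_1F2_Suc by simp
  moreover have "filterlim (\<lambda>n. (real n + 1) * (\<beta> + n) * (\<gamma> + n) / (\<alpha> + n)) at_top sequentially"
    by real_asymp
  ultimately have "conv_radius ?c = \<infinity>"
    using nonzero by (intro conv_radius_ratio_limit_ereal always_eventually allI)
                     (auto simp: tendsto_PInfty_eq_at_top)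
  then show "ereal (norm z) < conv_radius ?c"
    by simp
qed

lemma hypergeom_adjoin_nonneg:
  fixes \<alpha> \<beta> \<gamma> :: real and as bs :: "real list"
  assumes "0 < \<alpha>" "0 < \<beta>" "0 < \<gamma>" and base: "\<And>u. u \<le> 0 \<Longrightarrow> 0 \<le> hypergeom [\<alpha>] [\<beta>, \<gamma>] u"
    and "list_all2 (\<lambda>a b. 0 < a \<and> a < b) as bs"
  shows "(\<forall>z. summable (\<lambda>k. norm (hypergeom_coeff (\<alpha> # as) (\<beta> # \<gamma> # bs) k * z ^ k)))
       \<and> (\<forall>u\<le>0. 0 \<le> hypergeom (\<alpha> # as) (\<beta> # \<gamma> # bs) u)"
  using assms(5)
proof (induction as bs rule: list_all2_induct)
  case Nil
  then show ?case
    using summable_norm_hypergeom_coeff_1F2[OF assms(1-3)] base by simp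
next
  case (Cons a as b bs)
  let ?c = "hypergeom_coeff (\<alpha> # as) (\<beta> # \<gamma> # bs)"
  from Cons have "0 < a" "a < b" "\<And>z. summable (\<lambda>k. norm (?c k * z ^ k))"
    "\<And>u. u \<le> 0 \<Longrightarrow> 0 \<le> (\<Sum>k. ?c k * u ^ k)"
    by (auto simp: hypergeom_eq_powser)
  note step = this(1,2) summable_norm_pochhammer_ratio_powser[OF this(1-3)]
    powser_pochhammer_ratio_pos[OF this(1-3) hypergeom_coeff_0 this(4)]
  show ?case
    using step by (auto simp: hypergeom_coeff_insert hypergeom_eq_powser mult.assoc intro: less_imp_le)
qed

lemma hypergeom_adjoin_pos:
  fixes \<alpha> \<beta> \<gamma> :: real and as bs :: "real list"
  assumes "0 < \<alpha>" "0 < \<beta>" "0 < \<gamma>" and base: "\<And>u. u \<le> 0 \<Longrightarrow> 0 \<le> hypergeom [\<alpha>] [\<beta>, \<gamma>] u"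
    and params: "list_all2 (\<lambda>a b. 0 < a \<and> a < b) as bs" and "as \<noteq> []" and "u \<le> 0"
  shows "0 < hypergeom (\<alpha> # as) (\<beta> # \<gamma> # bs) u"
proof -
  obtain a as' b bs' where lists: "as = a # as'" "bs = b # bs'"
    and "0 < a" "a < b" and params': "list_all2 (\<lambda>a b. 0 < a \<and> a < b) as' bs'"
    using params \<open>as \<noteq> []\<close> by (cases as; cases bs) auto
  note previous = hypergeom_adjoin_nonneg[OF assms(1-3) base params']
  have "0 < (\<Sum>k. pochhammer a k / pochhammer b k * hypergeom_coeff (\<alpha> # as') (\<beta> # \<gamma> # bs') k * u ^ k)"
    using previous
    by (intro powser_pochhammer_ratio_pos \<open>0 < a\<close> \<open>a < b\<close> hypergeom_coeff_0 \<open>u \<le> 0\<close>)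
       (auto simp: hypergeom_eq_powser)
  then show ?thesis
    by (simp add: lists hypergeom_coeff_insert hypergeom_eq_powser mult.assoc)
qed

theorem theorem7:
  fixes \<alpha> \<beta> \<gamma> :: real and p :: nat and a b :: "nat \<Rightarrow> real"
  assumes "\<alpha> > 0" and "\<beta> > 0" and "\<gamma> > 0"
    and "\<forall>x::real. hypergeom [\<alpha>] [\<beta>, \<gamma>] (- (x^2) / 4) \<ge> 0"
    and "p \<ge> 2"
    and "\<forall>j\<in>{1..p-1}. 0 < a j \<and> a j < b j"
  shows "\<forall>x::real. x > 0 \<longrightarrow>
    hypergeom (\<alpha> # map a [1..<p]) (\<beta> # \<gamma> # map b [1..<p]) (- (x^2) / 4) > 0"
proof (intro allI impI)
  fix x :: real
  have base: "0 \<le> hypergeom [\<alpha>] [\<beta>, \<gamma>] u" if "u \<le> 0" for u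
    using assms(4)[rule_format, of "2 * sqrt (- u)"] that by (simp add: power_mult_distrib)
  have "list_all2 (\<lambda>a b. 0 < a \<and> a < b) (map a [1..<p]) (map b [1..<p])"
    using assms(6) by (auto simp: list_all2_conv_all_nth)
  moreover have "map a [1..<p] \<noteq> []"
    using assms(5) by simp
  ultimately show "hypergeom (\<alpha> # map a [1..<p]) (\<beta> # \<gamma> # map b [1..<p]) (- (x^2) / 4) > 0"
    by (intro hypergeom_adjoin_pos[OF assms(1-3) base]) auto
qed

end
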